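(* Let $(A,G)$ be an admissible pair with $A\in M_{Q_0}(\mathbb Z)$ and let $\{i_1,\ldots,i_n\}$ be a $G$-orbit in $Q_0$. Then for every permutation $\sigma\in\mathfrak S_n$, $$\mu_{i_n}\circ\cdots\circ\mu_{i_1}(A)=\mu_{i_{\sigma(n)}}\circ\cdots\circ\mu_{i_{\sigma(1)}}(A).$$
   Context: $Q_0$ finite; $A=(a_{ij})$ skew-symmetrizable ($DA$ skew-symmetric for a positive integer diagonal $D$). Mutation $\mu_k(B)=(b'_{ij})$: $b'_{ij}=-b_{ij}$ if $k\in\{i,j\}$, else $b_{ij}+\tfrac12(|b_{ik}|b_{kj}+b_{ik}|b_{kj}|)$. An automorphism of $A$ is a permutation $g$ of $Q_0$ with $a_{gi,gj}=a_{ij}$; a group $G$ of such permutations is admissible (and $(A,G)$ an admissible pair) if for distinct $i,j$ in the same $G$-orbit there is no path of length $1$ or $2$ from $i$ to $j$ in the valued quiver of $A$ (i.e. $a_{ij}\le0$ and no $k$ with $a_{ik}>0$, $a_{kj}>0$). *)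

theory Defs
  imports "HOL-Combinatorics.Permutations"
begin

text \<open>Matrices indexed by the finite vertex set Q0 (a finite type 'q), integer entries.\<close>
type_synonym 'q mat = "'q \<Rightarrow> 'q \<Rightarrow> int"

definition skew_symmetrizable :: "'q::finite mat \<Rightarrow> bool" where
  "skew_symmetrizable A \<longleftrightarrow>
     (\<exists>D::'q \<Rightarrow> int. (\<forall>i. D i > 0) \<and> (\<forall>i j. D i * A i j = - (D j * A j i)))"

text \<open>Matrix mutation at k. The quantity |b_ik| b_kj + b_ik |b_kj| is always even,
  so integer division by 2 is exact.\<close>
definition mutate :: "'q \<Rightarrow> 'q mat \<Rightarrow> 'q mat" where
  "mutate k B = (\<lambda>i j. if k = i \<or> k = j then - B i j
                        else B i j + (\<bar>B i k\<bar> * B k j + B i k * \<bar>B k j\<bar>) div 2)"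

definition mutseq :: "'q list \<Rightarrow> 'q mat \<Rightarrow> 'q mat" where
  "mutseq ks A = foldl (\<lambda>B k. mutate k B) A ks"

definition is_automorphism :: "'q mat \<Rightarrow> ('q \<Rightarrow> 'q) \<Rightarrow> bool" where
  "is_automorphism A g \<longleftrightarrow> bij g \<and> (\<forall>i j. A (g i) (g j) = A i j)"

definition automorphism_group :: "'q mat \<Rightarrow> ('q \<Rightarrow> 'q) set \<Rightarrow> bool" where
  "automorphism_group A G \<longleftrightarrow>
     (\<forall>g\<in>G. is_automorphism A g) \<and> id \<in> G \<and>
     (\<forall>g\<in>G. \<forall>h\<in>G. g \<circ> h \<in> G) \<and> (\<forall>g\<in>G. inv g \<in> G)"

definition orbit :: "('q \<Rightarrow> 'q) set \<Rightarrow> 'q \<Rightarrow> 'q set" where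
  "orbit G i = {g i | g. g \<in> G}"

definition admissible :: "'q mat \<Rightarrow> ('q \<Rightarrow> 'q) set \<Rightarrow> bool" where
  "admissible A G \<longleftrightarrow> automorphism_group A G \<and>
     (\<forall>i j. i \<noteq> j \<and> j \<in> orbit G i \<longrightarrow>
        A i j \<le> 0 \<and> \<not> (\<exists>k. A i k > 0 \<and> A k j > 0))"

definition admissible_pair :: "'q::finite mat \<Rightarrow> ('q \<Rightarrow> 'q) set \<Rightarrow> bool" where
  "admissible_pair A G \<longleftrightarrow> skew_symmetrizable A \<and> admissible A G"

end

theory Submission
  imports Defs
begin

text \<open>Skew-symmetrizability forces the two entries between vertices of one orbit to have
  opposite signs, while admissibility makes both non-positive; so they vanish. Mutations at
  vertices k, l with b_kl = b_lk = 0 leave row and column k untouched when mutating at l (and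
  vice versa), hence commute, and this property of the orbit survives all the mutations.\<close>

definition pairwise_nonadjacent :: "'q set \<Rightarrow> 'q mat \<Rightarrow> bool" where
  "pairwise_nonadjacent S B \<longleftrightarrow> (\<forall>k\<in>S. \<forall>l\<in>S. k \<noteq> l \<longrightarrow> B k l = 0)"

lemma pairwise_nonadjacent_mutate:
  "pairwise_nonadjacent S B \<Longrightarrow> m \<in> S \<Longrightarrow> pairwise_nonadjacent S (mutate m B)"
  unfolding pairwise_nonadjacent_def mutate_def by auto

lemma mutate_nonadjacent_row_col:
  assumes "k \<noteq> l" "B k l = 0" "B l k = 0"
  shows "mutate l B k x = B k x" and "mutate l B x k = B x k"
  using assms unfolding mutate_def by auto

lemma mutate_commute:
  assumes "B k l = 0" "B l k = 0"
  shows "mutate k (mutate l B) = mutate l (mutate k B)"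
proof (cases "k = l")
  case False
  note row_col = mutate_nonadjacent_row_col[of k l B] mutate_nonadjacent_row_col[of l k B]
  show ?thesis
  proof (intro ext)
    fix x y
    show "mutate k (mutate l B) x y = mutate l (mutate k B) x y"
      unfolding mutate_def[of k "mutate l B"] mutate_def[of l "mutate k B"]
      using row_col assms False by (auto simp: mutate_def)
  qed
qed simp

lemma mutseq_Nil [simp]: "mutseq [] B = B"
  by (simp add: mutseq_def)

lemma mutseq_Cons [simp]: "mutseq (k # ks) B = mutseq ks (mutate k B)"
  by (simp add: mutseq_def)

lemma mutseq_append: "mutseq (ks @ ls) B = mutseq ls (mutseq ks B)"
  by (simp add: mutseq_def)

lemma mutseq_mutate_commute:
  "pairwise_nonadjacent S B \<Longrightarrow> set ks \<subseteq> S \<Longrightarrow> m \<in> S \<Longrightarrow>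
   mutseq ks (mutate m B) = mutate m (mutseq ks B)"
proof (induction ks arbitrary: B)
  case (Cons k ks)
  have "mutate k (mutate m B) = mutate m (mutate k B)"
    using Cons.prems
    by (cases "k = m") (auto simp: pairwise_nonadjacent_def intro: mutate_commute)
  moreover have "pairwise_nonadjacent S (mutate k B)"
    using Cons.prems by (intro pairwise_nonadjacent_mutate) auto
  ultimately show ?case
    using Cons.IH[of "mutate k B"] Cons.prems by simp
qed simp

lemma mutseq_mset_eq:
  "pairwise_nonadjacent S B \<Longrightarrow> set ks \<subseteq> S \<Longrightarrow> mset ks = mset ls \<Longrightarrow>
   mutseq ks B = mutseq ls B"
proof (induction ks arbitrary: B ls)
  case (Cons k ks)
  then have "k \<in> set ls" by (metis list.set_intros(1) set_mset_mset)
  then obtain ls1 ls2 where ls: "ls = ls1 @ k # ls2" by (meson split_list)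
  have "set ls \<subseteq> S" using Cons.prems(2,3) by (metis set_mset_mset)
  then have "mutseq ls B = mutseq (ls1 @ ls2) (mutate k B)"
    using mutseq_mutate_commute[of S B ls1 k] Cons.prems by (simp add: ls mutseq_append)
  also have "\<dots> = mutseq ks (mutate k B)"
  proof -
    have "pairwise_nonadjacent S (mutate k B)"
      using Cons.prems by (intro pairwise_nonadjacent_mutate) auto
    moreover have "mset ks = mset (ls1 @ ls2)" using Cons.prems(3) ls by simp
    moreover have "set ks \<subseteq> S" using Cons.prems(2) by simp
    ultimately show ?thesis using Cons.IH by (metis sym)
  qed
  finally show ?case by simp
qed simp

lemma skew_symmetrizable_nonpos_imp_zero:
  assumes "skew_symmetrizable A" "A k l \<le> 0" "A l k \<le> 0"
  shows "A k l = 0"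
proof -
  obtain D :: "_ \<Rightarrow> int" where D_pos: "\<And>i. D i > 0"
    and skew: "D k * A k l = - (D l * A l k)"
    using assms(1) by (auto simp: skew_symmetrizable_def)
  have "D k * A k l \<le> 0" "D l * A l k \<le> 0"
    using assms(2,3) D_pos by (simp_all add: mult_nonneg_nonpos less_imp_le)
  then have "D k * A k l = 0" using skew by linarith
  then show ?thesis using D_pos[of k] by simp
qed

lemma orbit_mem_common:
  assumes "automorphism_group A G" "k \<in> orbit G i" "l \<in> orbit G i"
  shows "l \<in> orbit G k"
proof -
  obtain g h where g: "g \<in> G" "k = g i" and h: "h \<in> G" "l = h i"
    using assms(2,3) by (auto simp: orbit_def)
  have "h \<circ> inv g \<in> G" "bij g"
    using assms(1) g h by (auto simp: automorphism_group_def is_automorphism_def)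
  moreover have "(h \<circ> inv g) k = l"
    using g h \<open>bij g\<close> by (simp add: bij_is_inj)
  ultimately show ?thesis unfolding orbit_def by blast
qed

lemma admissible_pair_orbit_nonadjacent:
  assumes "admissible_pair A G"
  shows "pairwise_nonadjacent (orbit G i) A"
  unfolding pairwise_nonadjacent_def
proof (intro ballI impI)
  fix k l assume kl: "k \<in> orbit G i" "l \<in> orbit G i" "k \<noteq> l"
  have "automorphism_group A G" and adm: "admissible A G"
    using assms by (auto simp: admissible_pair_def admissible_def)
  then have "l \<in> orbit G k" "k \<in> orbit G l" using kl orbit_mem_common by metis+
  then have "A k l \<le> 0" "A l k \<le> 0" using adm kl(3) by (auto simp: admissible_def)
  then show "A k l = 0"
    using assms skew_symmetrizable_nonpos_imp_zero by (auto simp: admissible_pair_def)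
qed

theorem mainTheorem9:
  fixes A :: "'q::finite mat" and G :: "('q \<Rightarrow> 'q) set" and i :: 'q and "is" :: "'q list"
    and \<sigma> :: "nat \<Rightarrow> nat"
  assumes "admissible_pair A G"
    and "distinct is" and "set is = orbit G i"
    and "\<sigma> permutes {..<length is}"
  shows "mutseq is A = mutseq (map (\<lambda>t. is ! \<sigma> t) [0..<length is]) A"
proof -
  have "map (\<lambda>t. is ! \<sigma> t) [0..<length is] = permute_list \<sigma> is"
    by (simp add: permute_list_def)
  then have "mset is = mset (map (\<lambda>t. is ! \<sigma> t) [0..<length is])"
    using mset_permute_list[OF assms(4)] by simp
  then show ?thesis
    using mutseq_mset_eq admissible_pair_orbit_nonadjacent[OF assms(1)] assms(3) by blast
qed

end
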